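(* Let $\mathbb{F}$ be a field, $n\ge1$ and $k\ge2$. For every flag $\mathcal{F}$ in $\mathbb{F}^n$ of length $k$, the semigroup $\varphi(\mathcal{F})$ is a $k$-maximal nilpotent subsemigroup of $M(n,\mathbb{F})$. Conversely, every $k$-maximal nilpotent subsemigroup of $M(n,\mathbb{F})$ equals $\varphi(\mathcal{F})$ for some flag $\mathcal{F}$ in $\mathbb{F}^n$ of length $k$.
   Context: $M(n,\mathbb{F})$ is the semigroup of $n\times n$ matrices over $\mathbb{F}$ under multiplication, identified with linear operators on $\mathbb{F}^n$. A flag in $\mathbb{F}^n$ of length $k$ is a chain of subspaces $0=V_0\subsetneq V_1\subsetneq\cdots\subsetneq V_k=\mathbb{F}^n$, and $\varphi(\mathcal{F})=\{a\in M(n,\mathbb{F}) : a(V_i)\subseteq V_{i-1}\text{ for all } i=1,\dots,k\}$. A semigroup $S$ with zero $0$ is nilpotent of nilpotency degree $k$ if $a_1\cdots a_k=0$ for all $a_j\in S$ and some product $b_1\cdots b_{k-1}$ of elements of $S$ is nonzero. A nilpotent subsemigroup of $M(n,\mathbb{F})$ of nilpotency degree $k$ is $k$-maximal if it is not properly contained in any other nilpotent subsemigroup of $M(n,\mathbb{F})$ of nilpotency degree $k$. *)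

theory Defs
  imports "HOL-Analysis.Analysis"
begin

text \<open>Matrices in M(n,F) are elements of type 'a^'n^'n with 'a a field and 'n a finite
  index type with n = CARD('n) elements; they act on F^n = 'a^'n via *v.\<close>

definition mat_prod_list :: "('a::semiring_1^'n^'n) list \<Rightarrow> 'a^'n^'n" where
  "mat_prod_list xs = foldr (**) xs (mat 1)"

definition is_flag :: "nat \<Rightarrow> (nat \<Rightarrow> ('a::field^'n) set) \<Rightarrow> bool" where
  "is_flag k V \<longleftrightarrow>
     (\<forall>i\<le>k. vec.subspace (V i)) \<and> V 0 = {0} \<and> V k = UNIV \<and>
     (\<forall>i\<in>{1..k}. V (i - 1) \<subset> V i)"

definition flag_semigroup :: "nat \<Rightarrow> (nat \<Rightarrow> ('a::field^'n) set) \<Rightarrow> ('a^'n^'n) set" where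
  "flag_semigroup k V = {a. \<forall>i\<in>{1..k}. (\<lambda>v. a *v v) ` V i \<subseteq> V (i - 1)}"

definition is_subsemigroup :: "('a::semiring_1^'n^'n) set \<Rightarrow> bool" where
  "is_subsemigroup S \<longleftrightarrow> (\<forall>a\<in>S. \<forall>b\<in>S. a ** b \<in> S)"

definition nilpotent_deg :: "nat \<Rightarrow> ('a::semiring_1^'n^'n) set \<Rightarrow> bool" where
  "nilpotent_deg k S \<longleftrightarrow> is_subsemigroup S \<and> 0 \<in> S \<and>
     (\<forall>xs. length xs = k \<and> set xs \<subseteq> S \<longrightarrow> mat_prod_list xs = 0) \<and>
     (\<exists>xs. length xs = k - 1 \<and> set xs \<subseteq> S \<and> mat_prod_list xs \<noteq> 0)"

definition k_maximal :: "nat \<Rightarrow> ('a::semiring_1^'n^'n) set \<Rightarrow> bool" where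
  "k_maximal k S \<longleftrightarrow> nilpotent_deg k S \<and>
     \<not> (\<exists>T. nilpotent_deg k T \<and> S \<subset> T)"

end

theory Submission imports Defs begin

text \<open>For a flag \<open>V\<close>, the semigroup \<open>\<phi>(V)\<close> maps any vector outside \<open>V j\<close> to any vector
  of \<open>V j\<close>, using a rank-one map that vanishes on \<open>V j\<close>. Chaining such maps down the flag
  gives a nonzero product of length \<open>k - 1\<close>. If \<open>t\<close> maps some \<open>x \<in> V i\<close> outside \<open>V (i - 1)\<close>,
  chaining maps up to \<open>x\<close> and down from \<open>t x\<close> gives a nonzero product of length \<open>k\<close> with
  \<open>t\<close> as one factor, so no semigroup of nilpotency degree \<open>k\<close> contains both \<open>\<phi>(V)\<close> and
  \<open>t\<close>. Conversely, a semigroup \<open>S\<close> of nilpotency degree \<open>k\<close> is contained in \<open>\<phi>\<close> of the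
  flag whose \<open>j\<close>-th member is the common kernel of all products of \<open>j\<close> elements of \<open>S\<close>,
  and equals it when \<open>S\<close> is \<open>k\<close>-maximal.\<close>

lemma mat_prod_list_Nil [simp]: "mat_prod_list [] = mat 1"
  by (simp add: mat_prod_list_def)

lemma mat_prod_list_Cons [simp]: "mat_prod_list (a # xs) = a ** mat_prod_list xs"
  by (simp add: mat_prod_list_def)

lemma mat_prod_list_append: "mat_prod_list (xs @ ys) = mat_prod_list xs ** mat_prod_list ys"
  by (induction xs) (auto simp: matrix_mul_assoc)

lemma mat_prod_list_snoc_mult_vec:
  "mat_prod_list (xs @ [a]) *v v = mat_prod_list xs *v (a *v v)"
  by (simp add: mat_prod_list_append matrix_vector_mul_assoc)

lemma mat_eq_0_iff_mult_vec: "(A::'a::semiring_1^'n^'m) = 0 \<longleftrightarrow> (\<forall>x. A *v x = 0)"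
  by (simp add: matrix_eq[of A 0])

lemma nilpotent_deg_mat_prod_list_eq_0:
  assumes "nilpotent_deg k S" "set xs \<subseteq> S" "k \<le> length xs"
  shows "mat_prod_list xs = 0"
proof -
  have "mat_prod_list (take k xs) = 0"
    using assms set_take_subset[of k xs] unfolding nilpotent_deg_def by auto
  then show ?thesis
    using mat_prod_list_append[of "take k xs" "drop k xs"] by simp
qed

lemma k_maximalI:
  assumes "nilpotent_deg k S" "\<And>T. nilpotent_deg k T \<Longrightarrow> S \<subseteq> T \<Longrightarrow> T \<subseteq> S"
  shows "k_maximal k S"
  using assms unfolding k_maximal_def by blast

lemma k_maximal_eq:
  assumes "k_maximal k S" "nilpotent_deg k T" "S \<subseteq> T"
  shows "S = T"
  using assms unfolding k_maximal_def by blast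

lemma exists_matrix_vanishing_on_subspace:
  fixes W :: "('a::field^'n) set"
  assumes W: "vec.subspace W" and v: "v \<notin> W"
  shows "\<exists>a::'a^'n^'n. (\<forall>x\<in>W. a *v x = 0) \<and> a *v v = u \<and> (\<forall>x. a *v x \<in> vec.span {u})"
proof -
  obtain C where C: "C \<subseteq> W" "vec.independent C" "W \<subseteq> vec.span C"
    by (rule vec.maximal_independent_subset_extend[of "{}" W]) (auto simp: vec.independent_empty)
  have span_C: "vec.span C = W" using C W by (meson antisym vec.span_minimal)
  have "vec.independent (insert v C)"
    using C v span_C by (simp add: vec.independent_insertI)
  then obtain g where g: "Vector_Spaces.linear (*s) (*s) g"
      "\<forall>x\<in>insert v C. g x = (if x = v then u else 0)"
      "range g = vec.span ((\<lambda>x. if x = v then u else 0) ` insert v C)"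
    using vec.linear_independent_extend_subspace[of _ "\<lambda>x. if x = v then u else 0"] by blast
  have "range g \<subseteq> vec.span {u}"
    unfolding g(3) by (rule vec.span_minimal) (auto intro: vec.span_base vec.span_zero)
  moreover have "\<forall>x\<in>W. g x = 0"
    using vec.linear_eq_0_on_span[OF g(1)] g(2) v C(1) span_C by (metis insertCI subsetD)
  ultimately show ?thesis
    using matrix_works[OF g(1)] g(2) by (intro exI[of _ "matrix g"]) auto
qed

locale flag =
  fixes k :: nat and V :: "nat \<Rightarrow> ('a::field^'n) set"
  assumes is_flag: "is_flag k V"
begin

lemma subspace: "i \<le> k \<Longrightarrow> vec.subspace (V i)"
  using is_flag unfolding is_flag_def by auto

lemma bottom: "V 0 = {0}"
  using is_flag unfolding is_flag_def by auto

lemma top: "V k = UNIV"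
  using is_flag unfolding is_flag_def by auto

lemma strict: "1 \<le> i \<Longrightarrow> i \<le> k \<Longrightarrow> V (i - 1) \<subset> V i"
  using is_flag unfolding is_flag_def by auto

lemma mono: "i \<le> j \<Longrightarrow> j \<le> k \<Longrightarrow> V i \<subseteq> V j"
proof (induction j rule: dec_induct)
  case (step j)
  then show ?case using strict[of "Suc j"] by auto
qed simp

lemma zero_mem: "i \<le> k \<Longrightarrow> 0 \<in> V i"
  using mono[of 0 i] bottom by auto

lemma length_pos: "0 < k"
proof (rule ccontr)
  assume "\<not> 0 < k"
  then have "(UNIV :: ('a^'n) set) = {0}" using bottom top by simp
  moreover have "(1::'a^'n) \<noteq> 0" by (simp add: vec_eq_iff)
  ultimately show False by blast
qed

lemma flag_semigroup_mult_vec: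
  "a \<in> flag_semigroup k V \<Longrightarrow> 1 \<le> i \<Longrightarrow> i \<le> k \<Longrightarrow> x \<in> V i \<Longrightarrow> a *v x \<in> V (i - 1)"
  unfolding flag_semigroup_def by (auto simp: image_subset_iff)

lemma in_flag_semigroupI:
  assumes j: "j \<le> k" and kill: "\<forall>x\<in>V j. a *v x = 0" and into: "\<forall>x. a *v x \<in> V j"
  shows "a \<in> flag_semigroup k V"
  unfolding flag_semigroup_def
proof (intro CollectI ballI image_subsetI)
  fix i x assume i: "i \<in> {1..k}" and x: "x \<in> V i"
  show "a *v x \<in> V (i - 1)"
  proof (cases "i \<le> j")
    case True
    then have "x \<in> V j" using mono[OF True j] x by blast
    then show ?thesis using kill zero_mem i by auto
  next
    case False
    then have "V j \<subseteq> V (i - 1)" using i by (intro mono) auto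
    then show ?thesis using into by blast
  qed
qed

lemma flag_semigroup_moves:
  assumes j: "j \<le> k" and x: "x \<notin> V j" and w: "w \<in> V j"
  shows "\<exists>a\<in>flag_semigroup k V. a *v x = w"
proof -
  obtain a :: "'a^'n^'n" where a: "\<forall>y\<in>V j. a *v y = 0" "a *v x = w" "\<forall>y. a *v y \<in> vec.span {w}"
    using exists_matrix_vanishing_on_subspace[OF subspace[OF j] x] by blast
  have "vec.span {w} \<subseteq> V j" using w subspace[OF j] by (simp add: vec.span_minimal)
  then have "a \<in> flag_semigroup k V" using a by (intro in_flag_semigroupI[OF j]) auto
  then show ?thesis using a by blast
qed

lemma flag_semigroup_closed: "is_subsemigroup (flag_semigroup k V)"
  unfolding is_subsemigroup_def
proof (intro ballI)
  fix a b assume a: "a \<in> flag_semigroup k V" and b: "b \<in> flag_semigroup k V"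
  have "a *v (b *v x) \<in> V (i - 1)" if i: "i \<in> {1..k}" and x: "x \<in> V i" for i x
  proof (cases "i = 1")
    case True
    then show ?thesis using flag_semigroup_mult_vec[OF b _ _ x] bottom i by simp
  next
    case False
    then have "1 \<le> i - 1" "i - 1 \<le> k" using i by auto
    then have "a *v (b *v x) \<in> V (i - 1 - 1)"
      using flag_semigroup_mult_vec[OF b _ _ x] i by (intro flag_semigroup_mult_vec[OF a]) auto
    moreover have "V (i - 1 - 1) \<subseteq> V (i - 1)" using i by (intro mono) auto
    ultimately show ?thesis by blast
  qed
  then show "a ** b \<in> flag_semigroup k V"
    unfolding flag_semigroup_def by (auto simp: matrix_vector_mul_assoc)
qed

lemma mat_prod_list_mult_vec_mem:
  assumes "set xs \<subseteq> flag_semigroup k V" "length xs \<le> i" "i \<le> k" "x \<in> V i"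
  shows "mat_prod_list xs *v x \<in> V (i - length xs)"
  using assms
proof (induction xs)
  case (Cons a xs)
  then have "a *v (mat_prod_list xs *v x) \<in> V (i - length xs - 1)"
    by (intro flag_semigroup_mult_vec) auto
  then show ?case by (simp add: matrix_vector_mul_assoc)
qed simp

lemma nonvanishing_product_below:
  "j \<le> k \<Longrightarrow> v \<notin> V j \<Longrightarrow>
   \<exists>xs. length xs = j \<and> set xs \<subseteq> flag_semigroup k V \<and> mat_prod_list xs *v v \<noteq> 0"
proof (induction j arbitrary: v)
  case 0
  then show ?case using bottom by (intro exI[of _ "[]"]) auto
next
  case (Suc j)
  obtain w where "w \<in> V (Suc j)" "w \<notin> V j" using strict[of "Suc j"] Suc.prems(1) by auto
  then obtain a where a: "a \<in> flag_semigroup k V" "a *v v \<notin> V j"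
    using flag_semigroup_moves Suc.prems by metis
  then obtain xs where "length xs = j" "set xs \<subseteq> flag_semigroup k V"
      "mat_prod_list xs *v (a *v v) \<noteq> 0"
    using Suc.IH[of "a *v v"] Suc.prems(1) by auto
  then show ?case using a by (intro exI[of _ "xs @ [a]"]) (auto simp: mat_prod_list_snoc_mult_vec)
qed

lemma product_onto_from_top:
  "p + d = k \<Longrightarrow> v \<in> V p \<Longrightarrow>
   \<exists>w xs. length xs = d \<and> set xs \<subseteq> flag_semigroup k V \<and> mat_prod_list xs *v w = v"
proof (induction d arbitrary: p v)
  case 0
  then show ?case by (intro exI[of _ v] exI[of _ "[]"]) auto
next
  case (Suc d)
  obtain u where u: "u \<in> V (Suc p)" "u \<notin> V p" using strict[of "Suc p"] Suc.prems(1) by auto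
  then obtain a where a: "a \<in> flag_semigroup k V" "a *v u = v"
    using flag_semigroup_moves[of p u v] Suc.prems by auto
  obtain w xs where "length xs = d" "set xs \<subseteq> flag_semigroup k V" "mat_prod_list xs *v w = u"
    using Suc.IH[of "Suc p" u] Suc.prems(1) u(1) by auto
  then show ?case
    using a by (intro exI[of _ w] exI[of _ "a # xs"]) (auto simp: matrix_vector_mul_assoc)
qed

lemma flag_semigroup_nilpotent: "nilpotent_deg k (flag_semigroup k V)"
  unfolding nilpotent_deg_def
proof (intro conjI allI impI)
  show "is_subsemigroup (flag_semigroup k V)" by (rule flag_semigroup_closed)
  show "0 \<in> flag_semigroup k V"
    unfolding flag_semigroup_def using zero_mem by auto
  fix xs :: "('a^'n^'n) list"
  assume "length xs = k \<and> set xs \<subseteq> flag_semigroup k V"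
  then show "mat_prod_list xs = 0"
    using mat_prod_list_mult_vec_mem[of xs k] top bottom by (simp add: mat_eq_0_iff_mult_vec)
next
  obtain v where "v \<notin> V (k - 1)" using strict[of k] length_pos top by auto
  then show "\<exists>xs. length xs = k - 1 \<and> set xs \<subseteq> flag_semigroup k V \<and> mat_prod_list xs \<noteq> 0"
    using nonvanishing_product_below[of "k - 1" v] by (metis diff_le_self mat_eq_0_iff_mult_vec)
qed

lemma flag_semigroup_maximal:
  assumes T: "nilpotent_deg k T" and sub: "flag_semigroup k V \<subseteq> T"
  shows "T \<subseteq> flag_semigroup k V"
proof
  fix t assume t: "t \<in> T"
  show "t \<in> flag_semigroup k V"
  proof (rule ccontr)
    assume "t \<notin> flag_semigroup k V"
    then obtain i x where i: "i \<in> {1..k}" and x: "x \<in> V i" and tx: "t *v x \<notin> V (i - 1)"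
      unfolding flag_semigroup_def by (auto simp: image_subset_iff)
    have "i - 1 \<le> k" using i by auto
    then obtain ys where ys: "length ys = i - 1" "set ys \<subseteq> flag_semigroup k V"
        "mat_prod_list ys *v (t *v x) \<noteq> 0"
      using nonvanishing_product_below tx by blast
    obtain w zs where zs: "length zs = k - i" "set zs \<subseteq> flag_semigroup k V"
        "mat_prod_list zs *v w = x"
      using product_onto_from_top[of i "k - i" x] i x by auto
    have "mat_prod_list (ys @ t # zs) *v w = mat_prod_list ys *v (t *v x)"
      using zs by (simp add: mat_prod_list_append matrix_vector_mul_assoc[symmetric])
    moreover have "mat_prod_list (ys @ t # zs) = 0"
      by (rule nilpotent_deg_mat_prod_list_eq_0[OF T]) (use ys zs t sub i in auto)
    ultimately show False using ys by simp
  qed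
qed

lemma flag_semigroup_k_maximal: "k_maximal k (flag_semigroup k V)"
  by (rule k_maximalI[OF flag_semigroup_nilpotent flag_semigroup_maximal])

end

definition kernel_chain :: "('a::semiring_1^'n^'n) set \<Rightarrow> nat \<Rightarrow> ('a^'n) set" where
  "kernel_chain S j = {v. \<forall>xs. length xs = j \<and> set xs \<subseteq> S \<longrightarrow> mat_prod_list xs *v v = 0}"

lemma kernel_chain_subspace: "vec.subspace (kernel_chain S j)"
  unfolding vec.subspace_def kernel_chain_def by (auto simp: vec.add vec.scale)

lemma kernel_chain_0: "kernel_chain S 0 = {0}"
  unfolding kernel_chain_def by auto

lemma kernel_chain_Suc: "kernel_chain S (Suc j) = {v. \<forall>s\<in>S. s *v v \<in> kernel_chain S j}"
proof (intro set_eqI iffI CollectI ballI)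
  fix v s assume "v \<in> kernel_chain S (Suc j)" "s \<in> S"
  then show "s *v v \<in> kernel_chain S j"
    unfolding kernel_chain_def by (auto simp: mat_prod_list_snoc_mult_vec[symmetric])
next
  fix v assume v: "v \<in> {v. \<forall>s\<in>S. s *v v \<in> kernel_chain S j}"
  show "v \<in> kernel_chain S (Suc j)"
    unfolding kernel_chain_def
  proof (intro CollectI allI impI)
    fix xs assume xs: "length xs = Suc j \<and> set xs \<subseteq> S"
    then obtain ys s where "xs = ys @ [s]" by (cases xs rule: rev_cases) auto
    then show "mat_prod_list xs *v v = 0"
      using v xs unfolding kernel_chain_def by (auto simp: mat_prod_list_snoc_mult_vec)
  qed
qed

lemma kernel_chain_mono: "kernel_chain S j \<subseteq> kernel_chain S (Suc j)"
  by (induction j) (auto simp: kernel_chain_0 kernel_chain_Suc[of S])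

lemma kernel_chain_stable:
  assumes "kernel_chain S j = kernel_chain S (Suc j)" "j \<le> m"
  shows "kernel_chain S m = kernel_chain S j"
  using assms(2)
proof (induction m rule: dec_induct)
  case (step m)
  have "kernel_chain S (Suc m) = {v. \<forall>s\<in>S. s *v v \<in> kernel_chain S j}"
    by (simp only: kernel_chain_Suc step.IH)
  also have "\<dots> = kernel_chain S j"
    using assms(1) by (simp only: kernel_chain_Suc)
  finally show ?case .
qed simp

lemma kernel_chain_top: "nilpotent_deg k S \<Longrightarrow> kernel_chain S k = UNIV"
  unfolding kernel_chain_def nilpotent_deg_def by auto

text \<open>The chain stops growing once two consecutive members agree, so equality anywhere below
  \<open>k\<close> would make all products of length \<open>k - 1\<close> vanish.\<close>

lemma kernel_chain_strict:
  assumes N: "nilpotent_deg k S" and i: "1 \<le> i" "i \<le> k"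
  shows "kernel_chain S (i - 1) \<subset> kernel_chain S i"
proof -
  have Suc_i: "Suc (i - 1) = i" using i by simp
  have "kernel_chain S (i - 1) \<noteq> kernel_chain S i"
  proof
    assume "kernel_chain S (i - 1) = kernel_chain S i"
    then have "kernel_chain S (k - 1) = kernel_chain S k"
      using kernel_chain_stable[of S "i - 1"] Suc_i i by (metis diff_le_mono le_trans diff_le_self)
    then have "\<forall>xs. length xs = k - 1 \<and> set xs \<subseteq> S \<longrightarrow> mat_prod_list xs = 0"
      using kernel_chain_top[OF N] unfolding kernel_chain_def mat_eq_0_iff_mult_vec by blast
    then show False using N unfolding nilpotent_deg_def by blast
  qed
  then show ?thesis using kernel_chain_mono[of S "i - 1"] Suc_i by auto
qed

lemma kernel_chain_is_flag:
  assumes "nilpotent_deg k S"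
  shows "is_flag k (kernel_chain S)"
  unfolding is_flag_def
  by (intro conjI allI ballI impI kernel_chain_subspace kernel_chain_0 kernel_chain_top[OF assms]
      kernel_chain_strict[OF assms]) auto

lemma subset_flag_semigroup_kernel_chain: "S \<subseteq> flag_semigroup k (kernel_chain S)"
  unfolding flag_semigroup_def image_subset_iff
proof (intro subsetI CollectI ballI)
  fix s i v assume "s \<in> S" "i \<in> {1..k}" "v \<in> kernel_chain S i"
  then show "s *v v \<in> kernel_chain S (i - 1)"
    using kernel_chain_Suc[of S "i - 1"] by (simp add: Suc_diff_1)
qed

theorem proposition8:
  fixes k :: nat
  assumes "k \<ge> 2"
  shows "(\<forall>V :: nat \<Rightarrow> ('a::field^'n) set.
            is_flag k V \<longrightarrow> k_maximal k (flag_semigroup k V)) \<and>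
         (\<forall>S :: ('a::field^'n^'n) set. k_maximal k S \<longrightarrow>
            (\<exists>V. is_flag k V \<and> S = flag_semigroup k V))"
proof (intro conjI allI impI)
  fix V :: "nat \<Rightarrow> ('a::field^'n) set"
  assume "is_flag k V"
  then interpret flag k V by (rule flag.intro)
  show "k_maximal k (flag_semigroup k V)" by (rule flag_semigroup_k_maximal)
next
  fix S :: "('a::field^'n^'n) set"
  assume M: "k_maximal k S"
  then have "nilpotent_deg k S" unfolding k_maximal_def by blast
  then interpret flag k "kernel_chain S" by (intro flag.intro kernel_chain_is_flag)
  have "S = flag_semigroup k (kernel_chain S)"
    by (rule k_maximal_eq[OF M flag_semigroup_nilpotent subset_flag_semigroup_kernel_chain])
  then show "\<exists>V. is_flag k V \<and> S = flag_semigroup k V" using is_flag by blast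
qed

end
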